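(* Let $\{e_k\}_{k=1}^\infty$ be the canonical orthonormal basis of the real Hilbert space $\ell_2$, and let $\mathcal{X}=\{x_k\}_{k=1}^\infty\subset\ell_2$ satisfy \[ \sum_{k=1}^\infty\|e_k-x_k\|^2\le\frac18.\] Then $\mathcal{X}$ is not injective.
   Context: A family $\{x_k\}$ in $\ell_2$ is called injective if whenever a Hilbert–Schmidt self-adjoint operator $T$ on $\ell_2$ satisfies $\langle Tx_k,x_k\rangle=0$ for all $k$, then $T=0$. *)

theory Defs
  imports "HOL-Analysis.Analysis"
begin

text \<open>The real Hilbert space l2 is modelled as the square-summable
  sequences nat => real (index 0 plays the role of index 1).\<close>

definition ell2 :: "(nat \<Rightarrow> real) \<Rightarrow> bool" where
  "ell2 x \<longleftrightarrow> summable (\<lambda>k. (x k)\<^sup>2)"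

definition ell2_inner :: "(nat \<Rightarrow> real) \<Rightarrow> (nat \<Rightarrow> real) \<Rightarrow> real" where
  "ell2_inner x y = (\<Sum>k. x k * y k)"

definition ell2_norm :: "(nat \<Rightarrow> real) \<Rightarrow> real" where
  "ell2_norm x = sqrt (\<Sum>k. (x k)\<^sup>2)"

definition canon_basis :: "nat \<Rightarrow> (nat \<Rightarrow> real)" where
  "canon_basis k = (\<lambda>j. if j = k then 1 else 0)"

text \<open>Bounded linear operator on l2 (only its values on l2 matter).\<close>
definition ell2_bounded_linear :: "((nat \<Rightarrow> real) \<Rightarrow> (nat \<Rightarrow> real)) \<Rightarrow> bool" where
  "ell2_bounded_linear T \<longleftrightarrow>
     (\<forall>x. ell2 x \<longrightarrow> ell2 (T x)) \<and>
     (\<forall>x y a b. ell2 x \<longrightarrow> ell2 y \<longrightarrow>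
        T (\<lambda>k. a * x k + b * y k) = (\<lambda>k. a * T x k + b * T y k)) \<and>
     (\<exists>C. \<forall>x. ell2 x \<longrightarrow> ell2_norm (T x) \<le> C * ell2_norm x)"

definition ell2_selfadjoint :: "((nat \<Rightarrow> real) \<Rightarrow> (nat \<Rightarrow> real)) \<Rightarrow> bool" where
  "ell2_selfadjoint T \<longleftrightarrow>
     (\<forall>x y. ell2 x \<longrightarrow> ell2 y \<longrightarrow> ell2_inner (T x) y = ell2_inner x (T y))"

text \<open>Hilbert--Schmidt: the sum of the squared norms of the images of an
  orthonormal basis is finite (basis independent).\<close>
definition ell2_hilbert_schmidt :: "((nat \<Rightarrow> real) \<Rightarrow> (nat \<Rightarrow> real)) \<Rightarrow> bool" where
  "ell2_hilbert_schmidt T \<longleftrightarrow> summable (\<lambda>k. (ell2_norm (T (canon_basis k)))\<^sup>2)"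

definition HS_selfadjoint :: "((nat \<Rightarrow> real) \<Rightarrow> (nat \<Rightarrow> real)) \<Rightarrow> bool" where
  "HS_selfadjoint T \<longleftrightarrow> ell2_bounded_linear T \<and> ell2_selfadjoint T \<and> ell2_hilbert_schmidt T"

definition injective_family :: "(nat \<Rightarrow> (nat \<Rightarrow> real)) \<Rightarrow> bool" where
  "injective_family X \<longleftrightarrow>
     (\<forall>T. HS_selfadjoint T \<longrightarrow> (\<forall>k. ell2_inner (T (X k)) (X k) = 0) \<longrightarrow>
          (\<forall>v. ell2 v \<longrightarrow> T v = (\<lambda>_. 0)))"

end

theory Submission
  imports Defs
begin

(* Write x_k = e_k + d_k; only \<Sum>\<^sub>k \<parallel>d_k\<parallel>\<^sup>2 < 1 is used. The Neumann series
   v = \<Sum>\<^sub>n g_n, with g_0 = e_0 and (g_{n+1})_k = -<g_n, d_k> for k \<noteq> 0, (g_{n+1})_0 = 0,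
   has \<parallel>g_n\<parallel> \<le> r^n for r = (\<Sum>\<^sub>k \<parallel>d_k\<parallel>\<^sup>2)^(1/2) < 1; it converges to a vector v
   with v_0 = 1 and v_k = -<v, d_k>, i.e. <v, x_k> = 0, for every k \<noteq> 0. Taking any u \<noteq> 0 with
   <u, x_0> = 0, the rank-two operator T y = <u, y> v + <v, y> u is self-adjoint and
   Hilbert-Schmidt, <T x_k, x_k> = 2 <u, x_k> <v, x_k> = 0 for all k, and T u \<noteq> 0. *)

lemma infsum_nat_eq_suminf:
  fixes g :: "nat \<Rightarrow> real"
  assumes "g summable_on UNIV"
  shows "infsum g UNIV = suminf g"
  using has_sum_imp_sums[OF has_sum_infsum[OF assms]] by (simp add: sums_iff)

lemma suminf_swap_abs_summable:
  fixes f :: "nat \<Rightarrow> nat \<Rightarrow> real"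
  assumes inner: "\<And>n. summable (\<lambda>j. \<bar>f n j\<bar>)"
    and outer: "summable (\<lambda>n. \<Sum>j. \<bar>f n j\<bar>)"
  shows "(\<Sum>j. \<Sum>n. f n j) = (\<Sum>n. \<Sum>j. f n j)"
proof -
  (* qualified names: Infinite_Set_Sum declares abs_summable_on as well *)
  have "Infinite_Sum.abs_summable_on (\<lambda>(n, j). f n j) (UNIV \<times> UNIV)"
  proof (subst Infinite_Sum.abs_summable_on_Sigma_iff, intro conjI ballI)
    show "Infinite_Sum.abs_summable_on (\<lambda>j. case (n, j) of (n, j) \<Rightarrow> f n j) UNIV" for n
      using inner by (simp add: norm_summable_imp_summable_on)
    have "infsum (\<lambda>j. norm (case (n, j) of (n, j) \<Rightarrow> f n j)) UNIV = (\<Sum>j. \<bar>f n j\<bar>)" for n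
      using inner by (simp add: infsum_nat_eq_suminf norm_summable_imp_summable_on)
    then show "Infinite_Sum.abs_summable_on
        (\<lambda>n. infsum (\<lambda>j. norm (case (n, j) of (n, j) \<Rightarrow> f n j)) UNIV) UNIV"
      using outer by (simp add: norm_summable_imp_summable_on suminf_nonneg inner)
  qed
  then have summable_pairs: "(\<lambda>(n, j). f n j) summable_on UNIV \<times> UNIV"
    by (rule summable_on_iff_abs_summable_on_real[THEN iffD2])
  then have summable_swapped: "(\<lambda>(j, n). f n j) summable_on UNIV \<times> UNIV"
    using summable_on_swap[THEN iffD1, OF summable_pairs] by (simp add: case_prod_unfold)
  have "infsum (\<lambda>j. infsum (\<lambda>n. f n j) UNIV) UNIV = infsum (\<lambda>n. infsum (\<lambda>j. f n j) UNIV) UNIV"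
    using infsum_swap_banach[OF summable_pairs] by simp
  moreover have "infsum (\<lambda>j. f n j) UNIV = (\<Sum>j. f n j)" for n
    using summable_on_SigmaD1[OF summable_pairs] by (simp add: infsum_nat_eq_suminf)
  moreover have "infsum (\<lambda>n. f n j) UNIV = (\<Sum>n. f n j)" for j
    using summable_on_SigmaD1[OF summable_swapped] by (simp add: infsum_nat_eq_suminf)
  moreover have "(\<lambda>n. infsum (\<lambda>j. f n j) UNIV) summable_on UNIV"
    using summable_on_Sigma_banach[OF summable_pairs] by simp
  moreover have "(\<lambda>j. infsum (\<lambda>n. f n j) UNIV) summable_on UNIV"
    using summable_on_Sigma_banach[OF summable_swapped] by simp
  ultimately show ?thesis by (simp add: infsum_nat_eq_suminf)
qed

lemma ell2_abs_prod_summable: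
  assumes "ell2 x" "ell2 y"
  shows "summable (\<lambda>k. \<bar>x k * y k\<bar>)"
proof (rule summable_comparison_test')
  show "summable (\<lambda>k. (x k)\<^sup>2 + (y k)\<^sup>2)"
    using assms unfolding ell2_def by (rule summable_add)
  have "\<bar>x k\<bar> * \<bar>y k\<bar> \<le> (x k)\<^sup>2 + (y k)\<^sup>2" for k
  proof -
    have "2 * (\<bar>x k\<bar> * \<bar>y k\<bar>) \<le> (x k)\<^sup>2 + (y k)\<^sup>2"
      using sum_squares_bound[of "\<bar>x k\<bar>" "\<bar>y k\<bar>"] by (simp add: mult.assoc)
    moreover have "0 \<le> \<bar>x k\<bar> * \<bar>y k\<bar>"
      by simp
    ultimately show ?thesis
      by linarith
  qed
  then show "norm \<bar>x k * y k\<bar> \<le> (x k)\<^sup>2 + (y k)\<^sup>2" for k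
    by (simp add: abs_mult)
qed

lemma ell2_prod_summable: "ell2 x \<Longrightarrow> ell2 y \<Longrightarrow> summable (\<lambda>k. x k * y k)"
  by (rule summable_rabs_cancel[OF ell2_abs_prod_summable])

lemma lincomb_sq_le: "((a::real) * p + b * q)\<^sup>2 \<le> 2 * a\<^sup>2 * p\<^sup>2 + 2 * b\<^sup>2 * q\<^sup>2"
proof -
  have "(a * p + b * q)\<^sup>2 + (a * p - b * q)\<^sup>2 = 2 * a\<^sup>2 * p\<^sup>2 + 2 * b\<^sup>2 * q\<^sup>2"
    by (simp add: power2_eq_square algebra_simps)
  then show ?thesis
    using zero_le_power2[of "a * p - b * q"] by linarith
qed

lemma ell2_lincomb:
  assumes "ell2 x" "ell2 y"
  shows "ell2 (\<lambda>k. a * x k + b * y k)"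
  unfolding ell2_def
proof (rule summable_comparison_test')
  show "summable (\<lambda>k. 2 * a\<^sup>2 * (x k)\<^sup>2 + 2 * b\<^sup>2 * (y k)\<^sup>2)"
    using assms unfolding ell2_def by (intro summable_add summable_mult)
qed (simp add: lincomb_sq_le)

lemma ell2_canon_basis: "ell2 (canon_basis k)"
  unfolding ell2_def canon_basis_def by (rule summable_finite[of "{k}"]) auto

lemma ell2_inner_canon_basis: "ell2_inner u (canon_basis k) = u k"
  unfolding ell2_inner_def canon_basis_def by (subst suminf_finite[of "{k}"]) auto

lemma ell2_inner_commute: "ell2_inner x y = ell2_inner y x"
  unfolding ell2_inner_def by (simp add: mult.commute)

lemma ell2_inner_lincomb_right:
  assumes "ell2 u" "ell2 x" "ell2 y"
  shows "ell2_inner u (\<lambda>k. a * x k + b * y k) = a * ell2_inner u x + b * ell2_inner u y"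
proof -
  have "(\<Sum>k. u k * (a * x k + b * y k)) = (\<Sum>k. a * (u k * x k) + b * (u k * y k))"
    by (simp add: algebra_simps)
  also have "\<dots> = a * (\<Sum>k. u k * x k) + b * (\<Sum>k. u k * y k)"
    using assms by (simp add: suminf_add[symmetric] suminf_mult summable_mult ell2_prod_summable)
  finally show ?thesis unfolding ell2_inner_def .
qed

lemma ell2_inner_add_right:
  "ell2 u \<Longrightarrow> ell2 x \<Longrightarrow> ell2 y \<Longrightarrow> ell2_inner u (\<lambda>k. x k + y k) = ell2_inner u x + ell2_inner u y"
  using ell2_inner_lincomb_right[of u x y 1 1] by simp

lemma ell2_sum_sq_nonneg: "ell2 x \<Longrightarrow> 0 \<le> (\<Sum>k. (x k)\<^sup>2)"
  unfolding ell2_def by (rule suminf_nonneg) auto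

lemma ell2_norm_nonneg: "ell2 x \<Longrightarrow> 0 \<le> ell2_norm x"
  unfolding ell2_norm_def by (simp add: ell2_sum_sq_nonneg)

lemma ell2_norm_sq: "ell2 x \<Longrightarrow> (ell2_norm x)\<^sup>2 = (\<Sum>k. (x k)\<^sup>2)"
  unfolding ell2_norm_def by (simp add: ell2_sum_sq_nonneg)

lemma ell2_inner_self: "ell2 x \<Longrightarrow> ell2_inner x x = (ell2_norm x)\<^sup>2"
  using ell2_norm_sq[of x] unfolding ell2_inner_def by (simp add: power2_eq_square)

lemma abs_le_ell2_norm:
  assumes "ell2 x"
  shows "\<bar>x j\<bar> \<le> ell2_norm x"
proof (rule abs_le_square_iff[THEN iffD2, THEN order_trans])
  have "(x j)\<^sup>2 \<le> (\<Sum>k. (x k)\<^sup>2)"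
    using assms sum_le_suminf[of "\<lambda>k. (x k)\<^sup>2" "{j}"] unfolding ell2_def by simp
  then show "(x j)\<^sup>2 \<le> (ell2_norm x)\<^sup>2"
    using assms by (simp add: ell2_norm_sq)
qed (use assms ell2_norm_nonneg in simp)

lemma ell2_norm_pos:
  assumes "ell2 x" "x \<noteq> (\<lambda>_. 0)"
  shows "0 < ell2_norm x"
proof -
  obtain j where "x j \<noteq> 0"
    using assms(2) by auto
  then show ?thesis
    using abs_le_ell2_norm[OF assms(1), of j] by linarith
qed

lemma ell2_Cauchy_Schwarz_sq:
  assumes "ell2 x" "ell2 y"
  shows "(\<Sum>k. x k * y k)\<^sup>2 \<le> (\<Sum>k. (x k)\<^sup>2) * (\<Sum>k. (y k)\<^sup>2)"
proof (rule LIMSEQ_le_const2)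
  show "(\<lambda>N. (\<Sum>k<N. x k * y k)\<^sup>2) \<longlonglongrightarrow> (\<Sum>k. x k * y k)\<^sup>2"
    using assms by (intro tendsto_power summable_LIMSEQ ell2_prod_summable)
  have "(\<Sum>k<N. x k * y k)\<^sup>2 \<le> (\<Sum>k. (x k)\<^sup>2) * (\<Sum>k. (y k)\<^sup>2)" for N
  proof (rule order_trans[OF Cauchy_Schwarz_ineq_sum])
    show "(\<Sum>k<N. (x k)\<^sup>2) * (\<Sum>k<N. (y k)\<^sup>2) \<le> (\<Sum>k. (x k)\<^sup>2) * (\<Sum>k. (y k)\<^sup>2)"
      using assms unfolding ell2_def by (intro mult_mono sum_le_suminf sum_nonneg suminf_nonneg) auto
  qed
  then show "\<exists>N. \<forall>n\<ge>N. (\<Sum>k<n. x k * y k)\<^sup>2 \<le> (\<Sum>k. (x k)\<^sup>2) * (\<Sum>k. (y k)\<^sup>2)"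
    by blast
qed

lemma suminf_abs_mult_le_ell2_norm:
  assumes "ell2 x" "ell2 y"
  shows "(\<Sum>k. \<bar>x k * y k\<bar>) \<le> ell2_norm x * ell2_norm y"
proof -
  have "ell2 (\<lambda>k. \<bar>x k\<bar>)" "ell2 (\<lambda>k. \<bar>y k\<bar>)"
    using assms unfolding ell2_def by simp_all
  then have "(\<Sum>k. \<bar>x k * y k\<bar>)\<^sup>2 \<le> (\<Sum>k. (x k)\<^sup>2) * (\<Sum>k. (y k)\<^sup>2)"
    using ell2_Cauchy_Schwarz_sq by (fastforce simp: abs_mult)
  also have "\<dots> = (ell2_norm x * ell2_norm y)\<^sup>2"
    using assms by (simp only: ell2_norm_sq power_mult_distrib)
  finally show ?thesis
    by (rule power2_le_imp_le) (use assms ell2_norm_nonneg in simp)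
qed

lemma abs_ell2_inner_le:
  assumes "ell2 x" "ell2 y"
  shows "\<bar>ell2_inner x y\<bar> \<le> ell2_norm x * ell2_norm y"
  unfolding ell2_inner_def
  using summable_rabs[OF ell2_abs_prod_summable[OF assms]] suminf_abs_mult_le_ell2_norm[OF assms]
  by linarith

locale ell2_small_perturbation =
  fixes d :: "nat \<Rightarrow> nat \<Rightarrow> real"
  assumes ell2_perturbation: "\<And>k. ell2 (d k)"
    and summable_perturbation: "summable (\<lambda>k. (ell2_norm (d k))\<^sup>2)"
    and perturbation_lt_1: "(\<Sum>k. (ell2_norm (d k))\<^sup>2) < 1"
begin

definition perturbation_size :: real where
  "perturbation_size = sqrt (\<Sum>k. (ell2_norm (d k))\<^sup>2)"

abbreviation (input) r where "r \<equiv> perturbation_size"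

lemma perturbation_size_nonneg: "0 \<le> r"
  unfolding perturbation_size_def
  using summable_perturbation by (simp add: suminf_nonneg)

lemma perturbation_size_lt_1: "r < 1"
  unfolding perturbation_size_def using perturbation_lt_1 by simp


primrec neumann_term :: "nat \<Rightarrow> nat \<Rightarrow> real" where
  "neumann_term 0 = canon_basis 0"
| "neumann_term (Suc n) = (\<lambda>k. if k = 0 then 0 else - ell2_inner (neumann_term n) (d k))"

lemma ell2_neumann_term: "ell2 (neumann_term n) \<and> ell2_norm (neumann_term n) \<le> r ^ n"
proof (induction n)
  case 0
  have "(\<Sum>j. (canon_basis 0 j)\<^sup>2) = 1"
    unfolding canon_basis_def by (subst suminf_finite[of "{0}"]) auto
  then show ?case
    by (simp add: ell2_canon_basis ell2_norm_def)
next
  case (Suc n)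
  let ?g = "neumann_term n"
  have term_sq_le: "(neumann_term (Suc n) k)\<^sup>2 \<le> (ell2_norm ?g)\<^sup>2 * (ell2_norm (d k))\<^sup>2" for k
    using abs_ell2_inner_le[of ?g "d k"] Suc.IH ell2_perturbation
    by (simp add: power_mult_distrib[symmetric] abs_le_square_iff[symmetric] ell2_norm_nonneg)
  have summable_bound: "summable (\<lambda>k. (ell2_norm ?g)\<^sup>2 * (ell2_norm (d k))\<^sup>2)"
    using summable_perturbation by (rule summable_mult)
  have summable_term: "summable (\<lambda>k. (neumann_term (Suc n) k)\<^sup>2)"
    by (rule summable_comparison_test'[OF summable_bound]) (simp only: real_norm_def abs_power2 term_sq_le)
  have "(ell2_norm (neumann_term (Suc n)))\<^sup>2 = (\<Sum>k. (neumann_term (Suc n) k)\<^sup>2)"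
    using summable_term by (intro ell2_norm_sq) (simp add: ell2_def)
  also have "\<dots> \<le> (\<Sum>k. (ell2_norm ?g)\<^sup>2 * (ell2_norm (d k))\<^sup>2)"
    by (rule suminf_le[OF term_sq_le summable_term summable_bound])
  also have "\<dots> = (ell2_norm ?g * r)\<^sup>2"
    using summable_perturbation perturbation_size_nonneg
    by (simp add: suminf_mult power_mult_distrib perturbation_size_def)
  also have "\<dots> \<le> (r ^ Suc n)\<^sup>2"
  proof (rule power_mono)
    show "ell2_norm ?g * r \<le> r ^ Suc n"
      using mult_right_mono[OF conjunct2[OF Suc.IH] perturbation_size_nonneg] by (simp add: mult.commute)
    show "0 \<le> ell2_norm ?g * r"
      using Suc.IH ell2_norm_nonneg perturbation_size_nonneg by simp
  qed
  finally have "ell2_norm (neumann_term (Suc n)) \<le> r ^ Suc n"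
    by (rule power2_le_imp_le) (simp add: perturbation_size_nonneg)
  then show ?case
    using summable_term unfolding ell2_def by simp
qed

lemma abs_neumann_term_le: "\<bar>neumann_term n j\<bar> \<le> r ^ n"
  using abs_le_ell2_norm ell2_neumann_term order_trans by blast

lemma summable_abs_neumann_term: "summable (\<lambda>n. \<bar>neumann_term n j\<bar>)"
  using perturbation_size_nonneg perturbation_size_lt_1
  by (intro summable_comparison_test'[OF summable_geometric[of r]]) (simp_all add: abs_neumann_term_le)

lemma summable_neumann_term: "summable (\<lambda>n. neumann_term n j)"
  by (rule summable_rabs_cancel[OF summable_abs_neumann_term])

lemma summable_power_perturbation_size_mult: "summable (\<lambda>n. r ^ n * c)"
  using perturbation_size_nonneg perturbation_size_lt_1 by (simp add: summable_mult2)

lemma suminf_abs_neumann_term_perturbation_le: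
  "(\<Sum>j. \<bar>neumann_term n j * d k j\<bar>) \<le> r ^ n * ell2_norm (d k)"
  using suminf_abs_mult_le_ell2_norm ell2_neumann_term ell2_perturbation ell2_norm_nonneg
  by (meson mult_right_mono order_trans)

definition neumann_sum :: "nat \<Rightarrow> real" where
  "neumann_sum j = (\<Sum>n. neumann_term n j)"

lemma neumann_sum_0: "neumann_sum 0 = 1"
  using suminf_split_head[OF summable_neumann_term, of 0]
  by (simp add: neumann_sum_def canon_basis_def)

lemma neumann_sum_eq:
  assumes "k \<noteq> 0"
  shows "neumann_sum k = - (\<Sum>n. ell2_inner (neumann_term n) (d k))"
proof -
  have "neumann_sum k = (\<Sum>n. neumann_term (Suc n) k)"
    using suminf_split_head[OF summable_neumann_term, of k] assms
    by (simp add: neumann_sum_def canon_basis_def)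
  also have "\<dots> = - (\<Sum>n. ell2_inner (neumann_term n) (d k))"
    using summable_neumann_term[of k, THEN summable_ignore_initial_segment[where k = 1]] assms
    by (simp add: suminf_minus summable_minus_iff)
  finally show ?thesis .
qed

lemma abs_neumann_sum_le:
  assumes "k \<noteq> 0"
  shows "\<bar>neumann_sum k\<bar> \<le> ell2_norm (d k) / (1 - r)"
proof -
  have inner_le: "\<bar>ell2_inner (neumann_term n) (d k)\<bar> \<le> r ^ n * ell2_norm (d k)" for n
    using abs_ell2_inner_le[of "neumann_term n" "d k"] ell2_neumann_term[of n] ell2_perturbation
      ell2_norm_nonneg[of "d k"]
    by (meson mult_right_mono order_trans)
  note summable_geom = summable_power_perturbation_size_mult[of "ell2_norm (d k)"]
  have summable_inner: "summable (\<lambda>n. \<bar>ell2_inner (neumann_term n) (d k)\<bar>)"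
    by (rule summable_comparison_test'[OF summable_geom]) (simp add: inner_le)
  have "\<bar>neumann_sum k\<bar> \<le> (\<Sum>n. \<bar>ell2_inner (neumann_term n) (d k)\<bar>)"
    using summable_rabs[OF summable_inner] by (simp add: neumann_sum_eq assms)
  also have "\<dots> \<le> (\<Sum>n. r ^ n * ell2_norm (d k))"
    by (rule suminf_le[OF inner_le summable_inner summable_geom])
  also have "\<dots> = ell2_norm (d k) / (1 - r)"
    using perturbation_size_nonneg perturbation_size_lt_1
    by (simp add: suminf_mult2[symmetric] suminf_geometric)
  finally show ?thesis .
qed

lemma ell2_neumann_sum: "ell2 neumann_sum"
  unfolding ell2_def
proof (rule summable_comparison_test'[where N = 1])
  show "summable (\<lambda>k. (ell2_norm (d k))\<^sup>2 / (1 - r)\<^sup>2)"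
    using summable_perturbation by (rule summable_divide)
  fix k :: nat
  assume "1 \<le> k"
  then have "\<bar>neumann_sum k\<bar> \<le> ell2_norm (d k) / (1 - r)"
    by (intro abs_neumann_sum_le) simp
  then have "\<bar>neumann_sum k\<bar>\<^sup>2 \<le> (ell2_norm (d k) / (1 - r))\<^sup>2"
    by (rule power_mono) simp
  then show "norm ((neumann_sum k)\<^sup>2) \<le> (ell2_norm (d k))\<^sup>2 / (1 - r)\<^sup>2"
    by (simp add: power_divide)
qed

lemma ell2_inner_neumann_sum: "ell2_inner neumann_sum (d k) = (\<Sum>n. ell2_inner (neumann_term n) (d k))"
proof -
  have summable_abs: "summable (\<lambda>j. \<bar>neumann_term n j * d k j\<bar>)" for n
    by (intro ell2_abs_prod_summable) (simp_all add: ell2_neumann_term ell2_perturbation)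
  have "ell2_inner neumann_sum (d k) = (\<Sum>j. \<Sum>n. neumann_term n j * d k j)"
    unfolding ell2_inner_def neumann_sum_def
    by (intro suminf_cong suminf_mult2 summable_neumann_term)
  also have "\<dots> = (\<Sum>n. \<Sum>j. neumann_term n j * d k j)"
  proof (rule suminf_swap_abs_summable[OF summable_abs])
    show "summable (\<lambda>n. \<Sum>j. \<bar>neumann_term n j * d k j\<bar>)"
    proof (rule summable_comparison_test'[OF summable_power_perturbation_size_mult])
      show "norm (\<Sum>j. \<bar>neumann_term n j * d k j\<bar>) \<le> r ^ n * ell2_norm (d k)" for n
        using suminf_nonneg[OF summable_abs] suminf_abs_neumann_term_perturbation_le by simp
    qed
  qed
  finally show ?thesis
    unfolding ell2_inner_def .
qed

lemma neumann_sum_orthogonal: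
  assumes "k \<noteq> 0"
  shows "ell2_inner neumann_sum (\<lambda>j. canon_basis k j + d k j) = 0"
  using assms
  by (simp add: ell2_inner_add_right ell2_neumann_sum ell2_canon_basis ell2_perturbation
      ell2_inner_canon_basis ell2_inner_neumann_sum neumann_sum_eq)

end

lemma exists_ell2_orthogonal_to_perturbed_basis:
  fixes X :: "nat \<Rightarrow> nat \<Rightarrow> real"
  assumes ell2_X: "\<And>k. ell2 (X k)"
    and summable: "summable (\<lambda>k. (ell2_norm (\<lambda>j. canon_basis k j - X k j))\<^sup>2)"
    and small: "(\<Sum>k. (ell2_norm (\<lambda>j. canon_basis k j - X k j))\<^sup>2) < 1"
  shows "\<exists>v. ell2 v \<and> v 0 = 1 \<and> (\<forall>k. k \<noteq> 0 \<longrightarrow> ell2_inner v (X k) = 0)"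
proof -
  define d where "d k j = X k j - canon_basis k j" for k j
  have norm_d: "ell2_norm (d k) = ell2_norm (\<lambda>j. canon_basis k j - X k j)" for k
    unfolding d_def ell2_norm_def by (simp add: power2_commute)
  have "ell2 (d k)" for k
    using ell2_lincomb[OF ell2_X ell2_canon_basis, of 1 k "-1" k] by (simp add: d_def[abs_def])
  then interpret ell2_small_perturbation d
    using summable small by unfold_locales (simp_all add: norm_d)
  have "X k = (\<lambda>j. canon_basis k j + d k j)" for k
    by (simp add: d_def)
  then show ?thesis
    using ell2_neumann_sum neumann_sum_0 neumann_sum_orthogonal by metis
qed

definition sym_rank_two :: "(nat \<Rightarrow> real) \<Rightarrow> (nat \<Rightarrow> real) \<Rightarrow> (nat \<Rightarrow> real) \<Rightarrow> nat \<Rightarrow> real" where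
  "sym_rank_two u v y = (\<lambda>j. ell2_inner u y * v j + ell2_inner v y * u j)"

lemma ell2_norm_lincomb_sq_le:
  assumes "ell2 x" "ell2 y"
  shows "(ell2_norm (\<lambda>k. a * x k + b * y k))\<^sup>2 \<le> 2 * a\<^sup>2 * (ell2_norm x)\<^sup>2 + 2 * b\<^sup>2 * (ell2_norm y)\<^sup>2"
proof -
  have "(ell2_norm (\<lambda>k. a * x k + b * y k))\<^sup>2 = (\<Sum>k. (a * x k + b * y k)\<^sup>2)"
    using assms by (intro ell2_norm_sq ell2_lincomb)
  also have "\<dots> \<le> (\<Sum>k. 2 * a\<^sup>2 * (x k)\<^sup>2 + 2 * b\<^sup>2 * (y k)\<^sup>2)"
    using assms ell2_lincomb[OF assms, of a b] unfolding ell2_def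
    by (intro suminf_le lincomb_sq_le summable_add summable_mult)
  also have "\<dots> = 2 * a\<^sup>2 * (ell2_norm x)\<^sup>2 + 2 * b\<^sup>2 * (ell2_norm y)\<^sup>2"
    using assms unfolding ell2_def
    by (simp add: ell2_norm_sq suminf_add[symmetric] suminf_mult summable_mult ell2_def)
  finally show ?thesis .
qed

context
  fixes u v :: "nat \<Rightarrow> real"
  assumes ell2_u: "ell2 u" and ell2_v: "ell2 v"
begin

lemma ell2_sym_rank_two: "ell2 (sym_rank_two u v y)"
  unfolding sym_rank_two_def by (rule ell2_lincomb[OF ell2_v ell2_u])

lemma ell2_inner_sym_rank_two:
  "ell2 x \<Longrightarrow> ell2 y \<Longrightarrow>
    ell2_inner x (sym_rank_two u v y) = ell2_inner u y * ell2_inner x v + ell2_inner v y * ell2_inner x u"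
  unfolding sym_rank_two_def by (rule ell2_inner_lincomb_right[OF _ ell2_v ell2_u])

lemma ell2_bounded_linear_sym_rank_two: "ell2_bounded_linear (sym_rank_two u v)"
  unfolding ell2_bounded_linear_def
proof (intro conjI allI impI exI)
  show "ell2 (sym_rank_two u v x)" for x
    by (rule ell2_sym_rank_two)
  show "sym_rank_two u v (\<lambda>k. a * x k + b * y k) = (\<lambda>k. a * sym_rank_two u v x k + b * sym_rank_two u v y k)"
    if "ell2 x" "ell2 y" for x y a b
    using that ell2_u ell2_v by (simp add: sym_rank_two_def ell2_inner_lincomb_right algebra_simps)
  show "ell2_norm (sym_rank_two u v x) \<le> (2 * ell2_norm u * ell2_norm v) * ell2_norm x"
    if x: "ell2 x" for x
  proof -
    have inner_sq: "(ell2_inner w x)\<^sup>2 \<le> (ell2_norm w * ell2_norm x)\<^sup>2" if "ell2 w" for w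
      using power_mono[OF abs_ell2_inner_le[OF that x] abs_ge_zero, of 2] by simp
    have "(ell2_norm (sym_rank_two u v x))\<^sup>2
        \<le> 2 * (ell2_inner u x)\<^sup>2 * (ell2_norm v)\<^sup>2 + 2 * (ell2_inner v x)\<^sup>2 * (ell2_norm u)\<^sup>2"
      unfolding sym_rank_two_def by (rule ell2_norm_lincomb_sq_le[OF ell2_v ell2_u])
    also have "\<dots> \<le> 2 * (ell2_norm u * ell2_norm x)\<^sup>2 * (ell2_norm v)\<^sup>2
        + 2 * (ell2_norm v * ell2_norm x)\<^sup>2 * (ell2_norm u)\<^sup>2"
      using inner_sq[OF ell2_u] inner_sq[OF ell2_v] by (intro add_mono mult_right_mono) simp_all
    also have "\<dots> = (2 * ell2_norm u * ell2_norm v * ell2_norm x)\<^sup>2"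
      by (simp add: power2_eq_square algebra_simps)
    finally show ?thesis
      by (rule power2_le_imp_le) (simp add: ell2_norm_nonneg ell2_u ell2_v x)
  qed
qed

lemma ell2_selfadjoint_sym_rank_two: "ell2_selfadjoint (sym_rank_two u v)"
  unfolding ell2_selfadjoint_def
  by (simp add: ell2_inner_commute[of "sym_rank_two u v _"] ell2_inner_sym_rank_two
      ell2_inner_commute[of _ u] ell2_inner_commute[of _ v])

lemma ell2_hilbert_schmidt_sym_rank_two: "ell2_hilbert_schmidt (sym_rank_two u v)"
  unfolding ell2_hilbert_schmidt_def
proof (rule summable_comparison_test')
  show "summable (\<lambda>k. 2 * (u k)\<^sup>2 * (ell2_norm v)\<^sup>2 + 2 * (v k)\<^sup>2 * (ell2_norm u)\<^sup>2)"
    using ell2_u ell2_v unfolding ell2_def by (intro summable_add summable_mult2 summable_mult)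
  have "sym_rank_two u v (canon_basis k) = (\<lambda>j. u k * v j + v k * u j)" for k
    by (simp add: sym_rank_two_def ell2_inner_canon_basis)
  then show "norm ((ell2_norm (sym_rank_two u v (canon_basis k)))\<^sup>2)
      \<le> 2 * (u k)\<^sup>2 * (ell2_norm v)\<^sup>2 + 2 * (v k)\<^sup>2 * (ell2_norm u)\<^sup>2" for k
    using ell2_norm_lincomb_sq_le[OF ell2_v ell2_u, of "u k" "v k"] by simp
qed

lemma HS_selfadjoint_sym_rank_two: "HS_selfadjoint (sym_rank_two u v)"
  unfolding HS_selfadjoint_def
  using ell2_bounded_linear_sym_rank_two ell2_selfadjoint_sym_rank_two
    ell2_hilbert_schmidt_sym_rank_two by blast

lemma ell2_inner_sym_rank_two_self:
  assumes "ell2 x"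
  shows "ell2_inner (sym_rank_two u v x) x = 2 * ell2_inner u x * ell2_inner v x"
proof -
  have "ell2_inner (sym_rank_two u v x) x = ell2_inner x (sym_rank_two u v x)"
    by (rule ell2_inner_commute)
  also have "\<dots> = ell2_inner u x * ell2_inner x v + ell2_inner v x * ell2_inner x u"
    by (rule ell2_inner_sym_rank_two[OF assms assms])
  finally show ?thesis
    by (simp add: ell2_inner_commute[of x u] ell2_inner_commute[of x v])
qed

lemma sym_rank_two_nonzero:
  assumes "u \<noteq> (\<lambda>_. 0)" "v \<noteq> (\<lambda>_. 0)"
  shows "sym_rank_two u v u \<noteq> (\<lambda>_. 0)"
proof
  assume zero: "sym_rank_two u v u = (\<lambda>_. 0)"
  have u_pos: "0 < ell2_inner u u"
    using ell2_norm_pos[OF ell2_u assms(1)] ell2_inner_self[OF ell2_u] by simp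
  have "2 * ell2_inner u u * ell2_inner v u = ell2_inner (sym_rank_two u v u) u"
    by (rule ell2_inner_sym_rank_two_self[OF ell2_u, symmetric])
  also have "\<dots> = 0"
    unfolding zero ell2_inner_def by simp
  finally have "ell2_inner v u = 0"
    using u_pos by simp
  then have "sym_rank_two u v u = (\<lambda>j. ell2_inner u u * v j)"
    by (simp add: sym_rank_two_def)
  then show False
    using zero u_pos assms(2) by (metis mult_eq_0_iff less_irrefl)
qed

end

lemma not_injective_family_if_orthogonal_pair:
  assumes "\<And>k. ell2 (X k)" "ell2 u" "ell2 v" "u \<noteq> (\<lambda>_. 0)" "v \<noteq> (\<lambda>_. 0)"
    and "\<And>k. ell2_inner u (X k) * ell2_inner v (X k) = 0"
  shows "\<not> injective_family X"
proof
  assume "injective_family X"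
  moreover have "ell2_inner (sym_rank_two u v (X k)) (X k) = 0" for k
    using assms ell2_inner_sym_rank_two_self[of u v "X k"] by simp
  ultimately have "sym_rank_two u v u = (\<lambda>_. 0)"
    using HS_selfadjoint_sym_rank_two[OF assms(2,3)] assms(2) unfolding injective_family_def by blast
  then show False
    using sym_rank_two_nonzero[OF assms(2-5)] by contradiction
qed

lemma exists_ell2_orthogonal:
  assumes "ell2 x"
  shows "\<exists>u. ell2 u \<and> u \<noteq> (\<lambda>_. 0) \<and> ell2_inner u x = 0"
proof (cases "x 0 = 0 \<and> x 1 = 0")
  case True
  have "canon_basis 0 \<noteq> (\<lambda>_. 0)"
    by (metis canon_basis_def zero_neq_one)
  moreover have "ell2_inner (canon_basis 0) x = 0"
    using True by (simp add: ell2_inner_commute[of _ x] ell2_inner_canon_basis)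
  ultimately show ?thesis
    using ell2_canon_basis by blast
next
  case False
  define u where "u j = x 1 * canon_basis 0 j + (- x 0) * canon_basis 1 j" for j
  have "ell2 u"
    unfolding u_def[abs_def] by (intro ell2_lincomb ell2_canon_basis)
  moreover have "u \<noteq> (\<lambda>_. 0)"
    using False by (auto simp: u_def canon_basis_def fun_eq_iff dest: spec[of _ 0] spec[of _ 1])
  moreover have "ell2_inner u x = 0"
    using assms ell2_inner_lincomb_right[OF assms ell2_canon_basis ell2_canon_basis, of "x 1" 0 "- x 0" 1]
    by (simp add: u_def[abs_def] ell2_inner_commute[of _ x] ell2_inner_canon_basis)
  ultimately show ?thesis
    by blast
qed

theorem mainTheorem16:
  fixes X :: "nat \<Rightarrow> (nat \<Rightarrow> real)"
  assumes "\<forall>k. ell2 (X k)"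
    and "summable (\<lambda>k. (ell2_norm (\<lambda>j. canon_basis k j - X k j))\<^sup>2)"
    and "(\<Sum>k. (ell2_norm (\<lambda>j. canon_basis k j - X k j))\<^sup>2) \<le> 1/8"
  shows "\<not> injective_family X"
proof -
  obtain v where v: "ell2 v" "v 0 = 1" "\<And>k. k \<noteq> 0 \<Longrightarrow> ell2_inner v (X k) = 0"
    using exists_ell2_orthogonal_to_perturbed_basis[of X] assms by fastforce
  obtain u where u: "ell2 u" "u \<noteq> (\<lambda>_. 0)" "ell2_inner u (X 0) = 0"
    using exists_ell2_orthogonal assms(1) by blast
  have "ell2_inner u (X k) * ell2_inner v (X k) = 0" for k
    using u(3) v(3) by (cases "k = 0") simp_all
  moreover have "v \<noteq> (\<lambda>_. 0)"
    using v(2) by (metis zero_neq_one)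
  ultimately show ?thesis
    using not_injective_family_if_orthogonal_pair assms(1) u(1,2) v(1) by blast
qed

end
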